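(* Let $\alpha>0$ and $n\ge1$. Let $R^*$ have the distribution of $R$, independent of $X^{(n)}$, and define $$D^{(\alpha)}_{\mathsf{out},n}=\sum_{(\xi,r)\in X^{(n)}}|\xi|^\alpha 1_{B^{\mathbb{T}_n}_{R^*}(o)}(\xi),\qquad D^{(\alpha)}_{\mathsf{in},n}=\sum_{(\xi,r)\in X^{(n)}}|\xi|^\alpha 1_{B^{\mathbb{T}_n}_{r}(o)}(\xi),$$ with $|\xi|={\rm d}_{\mathbb{T}_n}(\xi,o)$. Then $\mathbb{E}D^{(\alpha)}_{\mathsf{out},n}=\mathbb{E}D^{(\alpha)}_{\mathsf{in},n}$.
   Context: Fix an integer $d\ge2$. $\mathbb{T}_n$ is the torus obtained from $[-n/2,n/2]^d$ by identifying opposite faces, with toroidal distance ${\rm d}_{\mathbb{T}_n}$ and $B^{\mathbb{T}_n}_r(\xi)=\{\eta\in\mathbb{T}_n:{\rm d}_{\mathbb{T}_n}(\xi,\eta)\le r\}$. $R$ is a nonnegative random variable with absolutely continuous distribution such that $\lim_{h\to\infty}h^s\mathbb{P}(R>h)=\beta$ for some $\beta,s\in(0,\infty)$. $X^{(n)}$ is a homogeneous Poisson point process of intensity $1$ on $\mathbb{T}_n$, each point independently marked with a mark in $[0,\infty)$ distributed as $R$ (points written $(\xi,r)$). *)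

theory Defs
  imports "HOL-Probability.Probability"
begin

text \<open>The torus T_n: the box [-n/2,n/2)^d (one representative per point), with
  the toroidal distance; o is the origin 0.\<close>

definition torus_box :: "nat \<Rightarrow> (real^'d) set" where
  "torus_box n = {x. \<forall>i. - real n / 2 \<le> x$i \<and> x$i < real n / 2}"

definition torus_dist :: "nat \<Rightarrow> real^'d \<Rightarrow> real^'d \<Rightarrow> real" where
  "torus_dist n x y =
     sqrt (\<Sum>i\<in>UNIV. (INF k::int. \<bar>x$i - y$i - real_of_int k * real n\<bar>)\<^sup>2)"

definition torus_ball :: "nat \<Rightarrow> real \<Rightarrow> real^'d \<Rightarrow> (real^'d) set" where
  "torus_ball n r \<xi> = {\<eta> \<in> torus_box n. torus_dist n \<xi> \<eta> \<le> r}"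

definition marked_point_law :: "nat \<Rightarrow> real measure \<Rightarrow> ((real^'d) \<times> real) measure" where
  "marked_point_law n mu = uniform_measure lborel (torus_box n) \<Otimes>\<^sub>M mu"

text \<open>Law of the independently marked homogeneous Poisson process of intensity 1 on T_n
  (volume n^d): a Poisson(n^d) number N of points, the points being the first N of an
  i.i.d. sequence of marked points. A configuration (N, X) has points X 0, ..., X (N-1).\<close>
definition marked_PPP :: "nat \<Rightarrow> real measure \<Rightarrow> (nat \<times> (nat \<Rightarrow> (real^'d) \<times> real)) measure" where
  "marked_PPP n mu =
     measure_pmf (poisson_pmf (real n ^ CARD('d))) \<Otimes>\<^sub>M
     (\<Pi>\<^sub>M i\<in>(UNIV::nat set). marked_point_law n mu)"

definition D_out :: "nat \<Rightarrow> real \<Rightarrow> (nat \<times> (nat \<Rightarrow> (real^'d) \<times> real)) \<Rightarrow> real \<Rightarrow> real" where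
  "D_out n \<alpha> \<omega> Rstar = (\<Sum>i<fst \<omega>. let \<xi> = fst (snd \<omega> i) in
      torus_dist n \<xi> 0 powr \<alpha> * indicator (torus_ball n Rstar 0) \<xi>)"

definition D_in :: "nat \<Rightarrow> real \<Rightarrow> (nat \<times> (nat \<Rightarrow> (real^'d) \<times> real)) \<Rightarrow> real" where
  "D_in n \<alpha> \<omega> = (\<Sum>i<fst \<omega>. let \<xi> = fst (snd \<omega> i); r = snd (snd \<omega> i) in
      torus_dist n \<xi> 0 powr \<alpha> * indicator (torus_ball n r 0) \<xi>)"

end

(* Both sides are means of sums over the points of the process, whose number N is independent
   of the i.i.d. marked points (xi, r). By Wald's identity each side is E N times a one-point
   mean: of |xi|^alpha 1_{B_r(o)}(xi) for D_in, and of |xi|^alpha 1_{B_R*(o)}(xi) for D_out.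
   Integrating R* out first (Fubini) shows that these agree, because R* has the law of a mark
   and is independent of the location xi. *)

theory Submission
  imports Defs
begin

lemma continuous_on_torus_dist:
  "continuous_on UNIV (\<lambda>p::(real^'d) \<times> (real^'d). torus_dist n (fst p) (snd p))"
proof -
  have INF_eq_infdist: "(INF k::int. \<bar>t - real_of_int k * real n\<bar>)
      = infdist t (range (\<lambda>k::int. real_of_int k * real n))" for t :: real
    by (simp add: infdist_def image_comp dist_real_def o_def)
  show ?thesis
    unfolding torus_dist_def INF_eq_infdist by (intro continuous_intros continuous_on_infdist)
qed

lemma borel_measurable_torus_dist[measurable (raw)]:
  assumes "f \<in> M \<rightarrow>\<^sub>M borel" and "g \<in> M \<rightarrow>\<^sub>M borel"
  shows "(\<lambda>x. torus_dist n (f x) (g x)) \<in> borel_measurable M"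
proof -
  have "(\<lambda>x. (f x, g x)) \<in> M \<rightarrow>\<^sub>M borel"
    using assms by measurable
  from measurable_compose[OF this borel_measurable_continuous_onI[OF continuous_on_torus_dist]]
  show ?thesis by simp
qed

lemma torus_box_borel[measurable]: "torus_box n \<in> sets borel"
  unfolding torus_box_def by measurable

lemma borel_measurable_torus_ball_weight:
  "(\<lambda>p. ennreal (torus_dist n (fst p) 0 powr \<alpha> * indicator (torus_ball n (snd p) 0) (fst p)))
     \<in> borel_measurable (borel \<Otimes>\<^sub>M borel :: ((real^'d) \<times> real) measure)"
  unfolding torus_ball_def indicator_def by measurable

lemma emeasure_torus_box:
  "emeasure lborel (torus_box n :: (real^'d) set) = ennreal (real n ^ CARD('d))"
proof -
  define u :: "real^'d" where "u = (\<chi> i. real n / 2)"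
  have side: "b \<in> Basis \<Longrightarrow> (u - (- u)) \<bullet> b = real n" for b
    by (auto simp: Basis_vec_def inner_axis u_def)
  have le: "b \<in> Basis \<Longrightarrow> (- u) \<bullet> b \<le> u \<bullet> b" for b
    by (auto simp: Basis_vec_def inner_axis u_def)
  have "(\<Prod>b\<in>Basis. (u - (- u)) \<bullet> b) = (\<Prod>b\<in>(Basis :: (real^'d) set). real n)"
    by (rule prod.cong[OF refl side])
  then have vol: "(\<Prod>b\<in>Basis. (u - (- u)) \<bullet> b) = real n ^ CARD('d)"
    by simp
  have "emeasure lborel (box (- u) u) \<le> emeasure lborel (torus_box n :: (real^'d) set)"
    by (rule emeasure_mono) (auto simp: mem_box_cart u_def torus_box_def less_imp_le)
  moreover have "emeasure lborel (torus_box n :: (real^'d) set) \<le> emeasure lborel (cbox (- u) u)"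
    by (rule emeasure_mono) (auto simp: mem_box_cart u_def torus_box_def less_imp_le)
  ultimately show ?thesis
    by (simp only: emeasure_lborel_box[OF le] emeasure_lborel_cbox[OF le] vol)
qed

lemma borel_measurable_random_sum:
  fixes f :: "nat \<Rightarrow> 'a \<Rightarrow> ennreal"
  assumes "N \<in> M \<rightarrow>\<^sub>M count_space UNIV" and "\<And>i. f i \<in> borel_measurable M"
  shows "(\<lambda>x. \<Sum>i<N x. f i x) \<in> borel_measurable M"
  by (rule measurable_compose_countable[where f="\<lambda>k x. \<Sum>i<k. f i x"]) (use assms in auto)

lemma nn_integral_PiM_component:
  assumes "prob_space P" and [measurable]: "\<phi> \<in> borel_measurable P"
  shows "(\<integral>\<^sup>+X. \<phi> (X i) \<partial>(\<Pi>\<^sub>M j\<in>(UNIV::'i set). P)) = (\<integral>\<^sup>+x. \<phi> x \<partial>P)"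
proof -
  have "(\<integral>\<^sup>+X. \<phi> (X i) \<partial>(\<Pi>\<^sub>M j\<in>(UNIV::'i set). P))
      = (\<integral>\<^sup>+x. \<phi> x \<partial>distr (\<Pi>\<^sub>M j\<in>(UNIV::'i set). P) P (\<lambda>X. X i))"
    by (rule nn_integral_distr[symmetric]) simp_all
  also have "\<dots> = (\<integral>\<^sup>+x. \<phi> x \<partial>P)"
    using distr_PiM_component[of UNIV "\<lambda>_. P" i] assms(1) by simp
  finally show ?thesis .
qed

lemma nn_integral_random_sum_iid:
  fixes q :: "nat pmf" and P :: "'a measure" and \<phi> :: "'a \<Rightarrow> ennreal"
  assumes P: "prob_space P" and [measurable]: "\<phi> \<in> borel_measurable P"
  shows "(\<integral>\<^sup>+\<omega>. (\<Sum>i<fst \<omega>. \<phi> (snd \<omega> i)) \<partial>(measure_pmf q \<Otimes>\<^sub>M (\<Pi>\<^sub>M i\<in>(UNIV::nat set). P)))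
       = (\<integral>\<^sup>+N. of_nat N \<partial>measure_pmf q) * (\<integral>\<^sup>+x. \<phi> x \<partial>P)"
proof -
  interpret Pi: prob_space "\<Pi>\<^sub>M i\<in>(UNIV::nat set). P"
    by (rule prob_space_PiM) (simp add: P)
  have sum_measurable: "(\<lambda>\<omega>. \<Sum>i<fst \<omega>. \<phi> (snd \<omega> i))
      \<in> borel_measurable (measure_pmf q \<Otimes>\<^sub>M (\<Pi>\<^sub>M i\<in>(UNIV::nat set). P))"
    by (rule borel_measurable_random_sum) measurable
  have "(\<integral>\<^sup>+\<omega>. (\<Sum>i<fst \<omega>. \<phi> (snd \<omega> i)) \<partial>(measure_pmf q \<Otimes>\<^sub>M (\<Pi>\<^sub>M i\<in>(UNIV::nat set). P)))
      = (\<integral>\<^sup>+N. \<integral>\<^sup>+X. (\<Sum>i<N. \<phi> (X i)) \<partial>(\<Pi>\<^sub>M i\<in>(UNIV::nat set). P) \<partial>measure_pmf q)"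
    using Pi.nn_integral_fst[OF sum_measurable] by simp
  also have "\<dots> = (\<integral>\<^sup>+N. (\<Sum>i<N. \<integral>\<^sup>+X. \<phi> (X i) \<partial>(\<Pi>\<^sub>M i\<in>(UNIV::nat set). P)) \<partial>measure_pmf q)"
    by (intro nn_integral_cong nn_integral_sum) measurable
  also have "\<dots> = (\<integral>\<^sup>+N. of_nat N * (\<integral>\<^sup>+x. \<phi> x \<partial>P) \<partial>measure_pmf q)"
    by (simp add: nn_integral_PiM_component[OF P])
  finally show ?thesis
    by (simp add: nn_integral_multc)
qed

lemma nn_integral_pair_integrate_snd:
  assumes "prob_space mu" and [measurable]: "g \<in> borel_measurable (U \<Otimes>\<^sub>M mu)"
  shows "(\<integral>\<^sup>+x. (\<integral>\<^sup>+r. g (fst x, r) \<partial>mu) \<partial>(U \<Otimes>\<^sub>M mu)) = (\<integral>\<^sup>+x. g x \<partial>(U \<Otimes>\<^sub>M mu))"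
proof -
  interpret mu: prob_space mu by fact
  have "(\<lambda>\<xi>. \<integral>\<^sup>+r. g (\<xi>, r) \<partial>mu) \<in> borel_measurable U"
    by measurable
  then show ?thesis
    using mu.nn_integral_fst[of "\<lambda>x. \<integral>\<^sup>+r. g (fst x, r) \<partial>mu" U] mu.nn_integral_fst[of g U]
    by (simp add: mu.emeasure_space_1)
qed

lemma nn_integral_random_sum_independent_mark:
  fixes q :: "nat pmf" and U :: "'a measure" and mu :: "'b measure" and g :: "'a \<times> 'b \<Rightarrow> ennreal"
  defines "M \<equiv> measure_pmf q \<Otimes>\<^sub>M (\<Pi>\<^sub>M i\<in>(UNIV::nat set). U \<Otimes>\<^sub>M mu)"
  assumes U: "prob_space U" and mu: "prob_space mu"
    and g[measurable]: "g \<in> borel_measurable (U \<Otimes>\<^sub>M mu)"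
  shows "(\<integral>\<^sup>+z. (\<Sum>i<fst (fst z). g (fst (snd (fst z) i), snd z)) \<partial>(M \<Otimes>\<^sub>M mu))
       = (\<integral>\<^sup>+\<omega>. (\<Sum>i<fst \<omega>. g (snd \<omega> i)) \<partial>M)"
proof -
  interpret mu: prob_space mu by fact
  have P: "prob_space (U \<Otimes>\<^sub>M mu)"
    by (rule prob_space_pair[OF U mu])
  define h where "h \<xi> = (\<integral>\<^sup>+r. g (\<xi>, r) \<partial>mu)" for \<xi>
  have [measurable]: "h \<in> borel_measurable U"
    unfolding h_def by measurable
  have sum_measurable:
    "(\<lambda>z. \<Sum>i<fst (fst z). g (fst (snd (fst z) i), snd z)) \<in> borel_measurable (M \<Otimes>\<^sub>M mu)"
    unfolding M_def by (rule borel_measurable_random_sum) measurable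
  have "(\<integral>\<^sup>+z. (\<Sum>i<fst (fst z). g (fst (snd (fst z) i), snd z)) \<partial>(M \<Otimes>\<^sub>M mu))
      = (\<integral>\<^sup>+\<omega>. \<integral>\<^sup>+r. (\<Sum>i<fst \<omega>. g (fst (snd \<omega> i), r)) \<partial>mu \<partial>M)"
    using mu.nn_integral_fst[OF sum_measurable] by simp
  also have "\<dots> = (\<integral>\<^sup>+\<omega>. (\<Sum>i<fst \<omega>. h (fst (snd \<omega> i))) \<partial>M)"
    unfolding h_def
    by (intro nn_integral_cong nn_integral_sum measurable_Pair2[OF g])
      (auto simp: M_def space_pair_measure space_PiM PiE_iff mem_Times_iff)
  also have "\<dots> = (\<integral>\<^sup>+N. of_nat N \<partial>measure_pmf q) * (\<integral>\<^sup>+x. h (fst x) \<partial>(U \<Otimes>\<^sub>M mu))"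
    unfolding M_def by (rule nn_integral_random_sum_iid[OF P]) measurable
  also have "\<dots> = (\<integral>\<^sup>+\<omega>. (\<Sum>i<fst \<omega>. g (snd \<omega> i)) \<partial>M)"
    unfolding M_def h_def nn_integral_pair_integrate_snd[OF mu g]
    by (rule nn_integral_random_sum_iid[OF P g, symmetric])
  finally show ?thesis .
qed

theorem proposition3p1:
  fixes mu :: "real measure" and \<alpha> \<beta> s :: real and n :: nat
  assumes d2: "CARD('d::finite) \<ge> 2"
    and R_prob: "prob_space mu" and R_sets: "sets mu = sets borel"
    and R_nonneg: "emeasure mu {..<0} = 0"
    and R_ac: "absolutely_continuous lborel mu"
    and \<beta>_pos: "\<beta> > 0" and s_pos: "s > 0"
    and R_tail: "((\<lambda>h. h powr s * measure mu {h<..}) \<longlongrightarrow> \<beta>) at_top"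
    and \<alpha>_pos: "\<alpha> > 0" and n_pos: "n \<ge> 1"
  shows "(\<integral>\<^sup>+ z. ennreal (D_out n \<alpha> (fst z) (snd z))
            \<partial>(marked_PPP n mu \<Otimes>\<^sub>M mu :: ((nat \<times> (nat \<Rightarrow> (real^'d) \<times> real)) \<times> real) measure))
       = (\<integral>\<^sup>+ \<omega>. ennreal (D_in n \<alpha> \<omega>) \<partial>(marked_PPP n mu :: (nat \<times> (nat \<Rightarrow> (real^'d) \<times> real)) measure))"
proof -
  define U :: "(real^'d) measure" where "U = uniform_measure lborel (torus_box n)"
  have U: "prob_space U"
    unfolding U_def using n_pos by (intro prob_space_uniform_measure) (simp_all add: emeasure_torus_box)
  define g :: "(real^'d) \<times> real \<Rightarrow> ennreal"
    where "g p = ennreal (torus_dist n (fst p) 0 powr \<alpha> * indicator (torus_ball n (snd p) 0) (fst p))" for p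
  have sets_marked_point: "sets (U \<Otimes>\<^sub>M mu) = sets (borel \<Otimes>\<^sub>M borel)"
    by (rule sets_pair_measure_cong) (simp_all add: U_def R_sets)
  have "g \<in> borel_measurable (U \<Otimes>\<^sub>M mu)"
    unfolding g_def measurable_cong_sets[OF sets_marked_point refl]
    by (rule borel_measurable_torus_ball_weight)
  moreover have "ennreal (D_out n \<alpha> \<omega> r) = (\<Sum>i<fst \<omega>. g (fst (snd \<omega> i), r))" for \<omega> r
    unfolding D_out_def g_def Let_def by simp
  moreover have "ennreal (D_in n \<alpha> \<omega>) = (\<Sum>i<fst \<omega>. g (snd \<omega> i))" for \<omega>
    unfolding D_in_def g_def Let_def by simp
  ultimately show ?thesis
    using nn_integral_random_sum_independent_mark[OF U R_prob]
    by (simp add: marked_PPP_def marked_point_law_def U_def)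
qed

end
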